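(* Let $p>1$ and $q>p-1$ with $q>0$, and let $f_{p,q}(t)=\sum_{j=1}^\infty j^{-p}\exp(i t j^q)$ for $t\in\mathbb{R}$. Then there is a constant $C<\infty$ such that for all $t,h\in\mathbb{R}$, $$|f_{p,q}(t+h)-f_{p,q}(t)|\le C|h|^{\alpha},\qquad \alpha=\frac{p-1}{q}.$$ *)

theory Defs
  imports "HOL-Analysis.Analysis"
begin

definition f_pq :: "real \<Rightarrow> real \<Rightarrow> real \<Rightarrow> complex" where
  "f_pq p q t = (\<Sum>n. complex_of_real (real (Suc n) powr (-p))
                    * exp (\<i> * complex_of_real (t * real (Suc n) powr q)))"

end

theory Submission
  imports Defs "HOL-Probability.Characteristic_Functions"
begin

text \<open>The \<open>n\<close>-th term of \<open>f(t + h) - f(t)\<close> has modulus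
  \<open>n^-p |exp(i h n^q) - 1| \<le> n^-p min 2 (|h| n^q)\<close>. For \<open>0 < |h| < 1\<close> split the
  series at \<open>N \<approx> |h|^(-1/q)\<close>: the head is at most \<open>|h| \<Sum>\<^bsub>n\<le>N\<^esub> n^(q-p) = O(|h| N^(q-p+1))\<close>,
  which needs \<open>q - p > -1\<close>, and the tail at most \<open>2 \<Sum>\<^bsub>n>N\<^esub> n^-p = O(N^(1-p))\<close>, which needs
  \<open>p > 1\<close>; both are \<open>O(|h|^((p-1)/q))\<close>. For \<open>|h| \<ge> 1\<close> the bound \<open>2 \<Sum> n^-p\<close> suffices.\<close>

lemma norm_exp_ii_minus_one_le_abs: "cmod (exp (\<i> * complex_of_real x) - 1) \<le> \<bar>x\<bar>"
  using iexp_approx1[of x 0] by simp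

lemma norm_exp_ii_minus_one_le_2: "cmod (exp (\<i> * complex_of_real x) - 1) \<le> 2"
  using norm_triangle_ineq4[of "exp (\<i> * complex_of_real x)" 1] by simp

lemma powr_le_antiderivative_diff:
  fixes s x :: real
  assumes "s < 0" "s \<noteq> -1" "x > 0"
  shows "(x + 1) powr s \<le> ((x + 1) powr (s + 1) - x powr (s + 1)) / (s + 1)"
proof -
  have "((\<lambda>y. y powr (s + 1)) has_real_derivative (s + 1) * y powr s) (at y)"
    if "x \<le> y" for y
    using has_real_derivative_powr[of y "s + 1"] that assms(3) by simp
  then obtain z where z: "x < z" "z < x + 1"
    and mvt: "(x + 1) powr (s + 1) - x powr (s + 1) = (s + 1) * z powr s"
    using MVT2[of x "x + 1" "\<lambda>y. y powr (s + 1)" "\<lambda>y. (s + 1) * y powr s"] by auto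
  have "(x + 1) powr s \<le> z powr s"
    using z assms by (intro powr_mono2') auto
  then show ?thesis
    using assms(2) by (simp add: mvt)
qed

lemma sum_Suc_powr_le:
  fixes s :: real
  assumes "s > -1"
  shows "(\<Sum>n<N. real (Suc n) powr s) \<le> (1 + 1 / (s + 1)) * real N powr (s + 1)"
proof (cases "s \<ge> 0")
  case True
  have "(\<Sum>n<N. real (Suc n) powr s) \<le> (\<Sum>n<N. real N powr s)"
    using True by (intro sum_mono powr_mono2) auto
  also have "\<dots> = real N powr (s + 1)"
    by (cases "N = 0") (auto simp: powr_add)
  also have "\<dots> \<le> (1 + 1 / (s + 1)) * real N powr (s + 1)"
    using assms by (simp add: distrib_right)
  finally show ?thesis .
next
  case False
  define F where "F n = real n powr (s + 1) / (s + 1)" for n :: nat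
  have "(\<Sum>n<N. real (Suc n) powr s) \<le> (\<Sum>n<N. F (Suc n) - F n)"
  proof (rule sum_mono)
    fix n
    show "real (Suc n) powr s \<le> F (Suc n) - F n"
    proof (cases "n = 0")
      case True
      then show ?thesis using assms False by (simp add: F_def field_simps)
    next
      case False
      then show ?thesis
        using powr_le_antiderivative_diff[of s "real n"] assms \<open>\<not> s \<ge> 0\<close>
        by (simp add: F_def diff_divide_distrib add.commute)
    qed
  qed
  also have "\<dots> = F N - F 0"
    by (rule sum_lessThan_telescope)
  also have "\<dots> = real N powr (s + 1) / (s + 1)"
    by (simp add: F_def)
  also have "\<dots> \<le> (1 + 1 / (s + 1)) * real N powr (s + 1)"
    using assms by (simp add: distrib_right)
  finally show ?thesis .
qed

lemma summable_Suc_powr: "p > 1 \<Longrightarrow> summable (\<lambda>n. real (Suc n) powr (-p))"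
  by (subst summable_Suc_iff) (simp add: summable_real_powr_iff)

lemma suminf_Suc_add_powr_le:
  fixes p :: real
  assumes "p > 1" "N \<ge> 1"
  shows "(\<Sum>n. real (Suc (n + N)) powr (-p)) \<le> real N powr (1 - p) / (p - 1)"
proof (rule suminf_le_const)
  show "summable (\<lambda>n. real (Suc (n + N)) powr (-p))"
    using summable_ignore_initial_segment[OF summable_Suc_powr[OF assms(1)], of N] by simp
  define F where "F n = real (N + n) powr (1 - p) / (p - 1)" for n
  fix M
  have swap_diff_divide: "(a - b) / (1 - p) = (b - a) / (p - 1)" for a b :: real
    using divide_minus_right[of "a - b" "p - 1"] by (simp add: minus_divide_left)
  have "real (Suc (n + N)) powr (-p) \<le> F n - F (Suc n)" for n
  proof -
    have "real (N + n) > 0"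
      using assms(2) by simp
    with assms(1) have "(real (N + n) + 1) powr (-p)
            \<le> ((real (N + n) + 1) powr (-p + 1) - real (N + n) powr (-p + 1)) / (-p + 1)"
      by (intro powr_le_antiderivative_diff) auto
    also have "\<dots> = ((real (N + n) + 1) powr (1 - p) - real (N + n) powr (1 - p)) / (1 - p)"
      by simp
    also have "\<dots> = (real (N + n) powr (1 - p) - (real (N + n) + 1) powr (1 - p)) / (p - 1)"
      by (rule swap_diff_divide)
    finally show ?thesis
      by (simp add: F_def diff_divide_distrib add_ac)
  qed
  then have "(\<Sum>n<M. real (Suc (n + N)) powr (-p)) \<le> (\<Sum>n<M. F n - F (Suc n))"
    by (intro sum_mono)
  also have "\<dots> = F 0 - F M"
    by (rule sum_lessThan_telescope')
  also have "\<dots> \<le> real N powr (1 - p) / (p - 1)"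
    using assms by (simp add: F_def)
  finally show "(\<Sum>n<M. real (Suc (n + N)) powr (-p)) \<le> real N powr (1 - p) / (p - 1)" .
qed

definition increment_term :: "real \<Rightarrow> real \<Rightarrow> real \<Rightarrow> nat \<Rightarrow> real" where
  "increment_term p q h n =
     real (Suc n) powr (-p) * cmod (exp (\<i> * complex_of_real (h * real (Suc n) powr q)) - 1)"

lemma increment_term_nonneg: "increment_term p q h n \<ge> 0"
  by (simp add: increment_term_def)

lemma increment_term_le_2: "increment_term p q h n \<le> 2 * real (Suc n) powr (-p)"
  unfolding increment_term_def
  using mult_left_mono[OF norm_exp_ii_minus_one_le_2[of "h * real (Suc n) powr q"],
      of "real (Suc n) powr (-p)"]
  by (simp add: mult.commute)

lemma increment_term_le_abs:
  "increment_term p q h n \<le> \<bar>h\<bar> * real (Suc n) powr (q - p)"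
proof -
  have "increment_term p q h n \<le> real (Suc n) powr (-p) * (\<bar>h\<bar> * real (Suc n) powr q)"
    unfolding increment_term_def
    using norm_exp_ii_minus_one_le_abs[of "h * real (Suc n) powr q"]
    by (intro mult_left_mono) (auto simp: abs_mult)
  then show ?thesis
    by (simp add: powr_add[symmetric] mult.left_commute)
qed

lemma summable_increment_term:
  assumes "p > 1"
  shows "summable (increment_term p q h)"
proof (rule summable_comparison_test')
  show "summable (\<lambda>n. 2 * real (Suc n) powr (-p))"
    by (rule summable_mult[OF summable_Suc_powr[OF assms]])
  show "norm (increment_term p q h n) \<le> 2 * real (Suc n) powr (-p)" for n
    by (metis abs_of_nonneg increment_term_le_2 increment_term_nonneg real_norm_def)
qed

lemma suminf_increment_term_le:
  assumes "p > 1"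
  shows "(\<Sum>n. increment_term p q h n) \<le> 2 * (\<Sum>n. real (Suc n) powr (-p))"
proof -
  have "(\<Sum>n. increment_term p q h n) \<le> (\<Sum>n. 2 * real (Suc n) powr (-p))"
    by (rule suminf_le[OF increment_term_le_2 summable_increment_term[OF assms]
          summable_mult[OF summable_Suc_powr[OF assms]]])
  also have "\<dots> = 2 * (\<Sum>n. real (Suc n) powr (-p))"
    by (rule suminf_mult[OF summable_Suc_powr[OF assms]])
  finally show ?thesis .
qed

lemma sum_increment_term_head_le:
  assumes "q > p - 1"
  shows "(\<Sum>n<N. increment_term p q h n) \<le> (1 + 1 / (q - p + 1)) * \<bar>h\<bar> * real N powr (q - p + 1)"
proof -
  have "(\<Sum>n<N. increment_term p q h n) \<le> \<bar>h\<bar> * (\<Sum>n<N. real (Suc n) powr (q - p))"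
    unfolding sum_distrib_left by (intro sum_mono increment_term_le_abs)
  also have "\<dots> \<le> \<bar>h\<bar> * ((1 + 1 / (q - p + 1)) * real N powr (q - p + 1))"
    using sum_Suc_powr_le[of "q - p" N] assms by (intro mult_left_mono) (auto simp: add_ac)
  finally show ?thesis by (simp add: mult_ac)
qed

lemma suminf_increment_term_tail_le:
  assumes "p > 1" "N \<ge> 1"
  shows "(\<Sum>n. increment_term p q h (n + N)) \<le> 2 * real N powr (1 - p) / (p - 1)"
proof -
  have summable_tail: "summable (\<lambda>n. real (Suc (n + N)) powr (-p))"
    using summable_ignore_initial_segment[OF summable_Suc_powr[OF assms(1)], of N] by simp
  have "(\<Sum>n. increment_term p q h (n + N)) \<le> (\<Sum>n. 2 * real (Suc (n + N)) powr (-p))"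
  proof (rule suminf_le)
    show "increment_term p q h (n + N) \<le> 2 * real (Suc (n + N)) powr (-p)" for n
      by (rule increment_term_le_2)
    show "summable (\<lambda>n. increment_term p q h (n + N))"
      by (rule summable_ignore_initial_segment[OF summable_increment_term[OF assms(1)]])
    show "summable (\<lambda>n. 2 * real (Suc (n + N)) powr (-p))"
      by (rule summable_mult[OF summable_tail])
  qed
  also have "\<dots> = 2 * (\<Sum>n. real (Suc (n + N)) powr (-p))"
    by (rule suminf_mult[OF summable_tail])
  also have "\<dots> \<le> 2 * real N powr (1 - p) / (p - 1)"
    using suminf_Suc_add_powr_le[OF assms] by simp
  finally show ?thesis .
qed

lemma suminf_increment_term_small_le:
  assumes p1: "p > 1" and qp: "q > p - 1" and "0 < \<bar>h\<bar>" "\<bar>h\<bar> < 1"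
  shows "(\<Sum>n. increment_term p q h n)
           \<le> (1 + 1 / (q - p + 1) + 2 * 2 powr (p - 1) / (p - 1)) * \<bar>h\<bar> powr ((p - 1) / q)"
proof -
  have q0: "q > 0" using p1 qp by linarith
  define H where "H = \<bar>h\<bar> powr (-1 / q)"
  have Hpowr: "H powr r = \<bar>h\<bar> powr (-r / q)" for r
    unfolding H_def by (simp add: powr_powr)
  have H1: "H \<ge> 1"
    unfolding H_def using powr_mono2'[of "-1 / q" "\<bar>h\<bar>" 1] assms q0 by simp
  define N where "N = nat \<lfloor>H\<rfloor>"
  have N_le: "real N \<le> H" and N_gt: "H < real N + 1" and N1: "N \<ge> 1"
    unfolding N_def using H1 by linarith+
  then have N_ge: "H / 2 \<le> real N"
    by linarith
  have "\<bar>h\<bar> * real N powr (q - p + 1) \<le> \<bar>h\<bar> * H powr (q - p + 1)"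
    using N_le qp by (intro mult_left_mono powr_mono2) auto
  also have "\<dots> = \<bar>h\<bar> powr ((p - 1) / q)"
    using assms q0 by (simp add: Hpowr powr_mult_base field_simps)
  finally have head_factor: "\<bar>h\<bar> * real N powr (q - p + 1) \<le> \<bar>h\<bar> powr ((p - 1) / q)" .
  have "(\<Sum>n<N. increment_term p q h n) \<le> (1 + 1 / (q - p + 1)) * \<bar>h\<bar> * real N powr (q - p + 1)"
    by (rule sum_increment_term_head_le[OF qp])
  also have "\<dots> \<le> (1 + 1 / (q - p + 1)) * \<bar>h\<bar> powr ((p - 1) / q)"
    unfolding mult.assoc using head_factor qp by (intro mult_left_mono) auto
  finally have head: "(\<Sum>n<N. increment_term p q h n) \<le> (1 + 1 / (q - p + 1)) * \<bar>h\<bar> powr ((p - 1) / q)" .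
  have "real N powr (1 - p) \<le> (H / 2) powr (1 - p)"
    using N_ge H1 p1 by (intro powr_mono2') auto
  also have "\<dots> = 2 powr (p - 1) * H powr (1 - p)"
    using H1 by (simp add: powr_divide powr_diff field_simps)
  also have "\<dots> = 2 powr (p - 1) * \<bar>h\<bar> powr ((p - 1) / q)"
    by (simp add: Hpowr)
  finally have tail_factor: "real N powr (1 - p) \<le> 2 powr (p - 1) * \<bar>h\<bar> powr ((p - 1) / q)" .
  have "(\<Sum>n. increment_term p q h (n + N)) \<le> 2 * real N powr (1 - p) / (p - 1)"
    by (rule suminf_increment_term_tail_le[OF p1 N1])
  also have "\<dots> \<le> 2 * (2 powr (p - 1) * \<bar>h\<bar> powr ((p - 1) / q)) / (p - 1)"
    using tail_factor p1 by (intro divide_right_mono mult_left_mono) auto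
  finally have tail: "(\<Sum>n. increment_term p q h (n + N))
                        \<le> 2 * 2 powr (p - 1) / (p - 1) * \<bar>h\<bar> powr ((p - 1) / q)"
    by simp
  have "(\<Sum>n. increment_term p q h n)
          = (\<Sum>n. increment_term p q h (n + N)) + (\<Sum>n<N. increment_term p q h n)"
    by (rule suminf_split_initial_segment[OF summable_increment_term[OF p1]])
  with head tail show ?thesis
    by (simp add: distrib_right)
qed

lemma suminf_increment_term_holder:
  assumes p1: "p > 1" and qp: "q > p - 1"
  shows "\<exists>C. \<forall>h. (\<Sum>n. increment_term p q h n) \<le> C * \<bar>h\<bar> powr ((p - 1) / q)"
proof -
  define S where "S = (\<Sum>n. real (Suc n) powr (-p))"
  define K where "K = 1 + 1 / (q - p + 1) + 2 * 2 powr (p - 1) / (p - 1)"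
  have S0: "S \<ge> 0"
    unfolding S_def using summable_Suc_powr[OF p1] by (intro suminf_nonneg) auto
  have K0: "K \<ge> 0"
    unfolding K_def using qp p1 by auto
  have "(\<Sum>n. increment_term p q h n) \<le> (2 * S + K) * \<bar>h\<bar> powr ((p - 1) / q)" for h
  proof -
    consider "h = 0" | "\<bar>h\<bar> \<ge> 1" | "0 < \<bar>h\<bar>" "\<bar>h\<bar> < 1" by linarith
    then show ?thesis
    proof cases
      case 1
      then show ?thesis by (simp add: increment_term_def)
    next
      case 2
      then have "1 \<le> \<bar>h\<bar> powr ((p - 1) / q)"
        using p1 qp by (intro ge_one_powr_ge_zero) auto
      have "(\<Sum>n. increment_term p q h n) \<le> 2 * S + K"
        using suminf_increment_term_le[OF p1, of q h] K0 unfolding S_def by linarith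
      also have "\<dots> \<le> (2 * S + K) * \<bar>h\<bar> powr ((p - 1) / q)"
        using mult_left_mono[OF \<open>1 \<le> \<bar>h\<bar> powr ((p - 1) / q)\<close>, of "2 * S + K"] S0 K0 by simp
      finally show ?thesis .
    next
      case 3
      have "(\<Sum>n. increment_term p q h n) \<le> K * \<bar>h\<bar> powr ((p - 1) / q)"
        unfolding K_def by (rule suminf_increment_term_small_le[OF p1 qp 3])
      also have "\<dots> \<le> (2 * S + K) * \<bar>h\<bar> powr ((p - 1) / q)"
        using S0 by (intro mult_right_mono) auto
      finally show ?thesis .
    qed
  qed
  then show ?thesis by blast
qed

lemma norm_f_pq_diff_le:
  assumes "p > 1"
  shows "cmod (f_pq p q (t + h) - f_pq p q t) \<le> (\<Sum>n. increment_term p q h n)"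
proof -
  define u where "u t n = complex_of_real (real (Suc n) powr (-p))
                          * exp (\<i> * complex_of_real (t * real (Suc n) powr q))" for t n
  have summable_u: "summable (u t)" for t
    by (rule summable_norm_cancel)
      (use summable_Suc_powr[OF assms] in \<open>simp add: u_def norm_mult\<close>)
  have norm_u_diff: "norm (u (t + h) n - u t n) = increment_term p q h n" for n
  proof -
    have "u (t + h) n - u t n
            = u t n * (exp (\<i> * complex_of_real (h * real (Suc n) powr q)) - 1)"
      by (simp add: u_def exp_add algebra_simps)
    then show ?thesis
      by (simp add: u_def norm_mult increment_term_def)
  qed
  have "f_pq p q (t + h) - f_pq p q t = (\<Sum>n. u (t + h) n - u t n)"
    unfolding f_pq_def u_def[symmetric] using suminf_diff[OF summable_u summable_u] by simp
  also have "cmod \<dots> \<le> (\<Sum>n. norm (u (t + h) n - u t n))"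
    by (rule summable_norm) (use summable_increment_term[OF assms] in \<open>simp add: norm_u_diff\<close>)
  finally show ?thesis by (simp add: norm_u_diff)
qed

theorem mainTheorem9:
  fixes p q :: real
  assumes "p > 1" and "q > p - 1" and "q > 0"
  shows "\<exists>C::real. \<forall>t h :: real.
           cmod (f_pq p q (t + h) - f_pq p q t) \<le> C * \<bar>h\<bar> powr ((p - 1) / q)"
proof -
  obtain C where C: "\<And>h. (\<Sum>n. increment_term p q h n) \<le> C * \<bar>h\<bar> powr ((p - 1) / q)"
    using suminf_increment_term_holder[OF assms(1,2)] by blast
  have "cmod (f_pq p q (t + h) - f_pq p q t) \<le> C * \<bar>h\<bar> powr ((p - 1) / q)" for t h
    using norm_f_pq_diff_le[OF assms(1)] C by (rule order_trans)
  then show ?thesis by blast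
qed

end
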